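(* Let $k\ge n\ge 2$, and let $\pi$ assign to each $n$-element subset $S\subseteq[k]$ a string $\pi(S)$ of length $n$ that is an ordering of the elements of $S$. Let $R\subseteq[k]$ with $|R|=n-1$, and suppose that $d(\pi(S),\pi(S'))\le 2$ for all $S,S'\in\mathcal U_R$. Then there exists a subset $A_R\subseteq R$ of size $n-2$ such that $R$ freezes $A_R$.
   Context: $[k]=\{1,\dots,k\}$; $d$ is Hamming distance; $\pi(S)[i]$ is the letter at position $i\in[n]$ of $\pi(S)$. For a set $R\subseteq[k]$, $\mathcal U_R$ is the set of all sets $S\subseteq[k]$ with $R\subset S$ and $|S|=|R|+1$. For $|R|=n-1$ and $A_R\subseteq R$, we say $R$ freezes $A_R$ (with freezing function $g_R$) if there is a one-to-one map $g_R:A_R\to[n]$ such that $\pi(S)[g_R(a)]=a$ for all $a\in A_R$ and all $S\in\mathcal U_R$. *)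

theory Defs
  imports Main
begin

text \<open>Strings are lists of naturals; positions [n] = {1..n} are accessed via
  list index i-1 (i.e. nth xs (i - 1)).\<close>

definition letter_at :: "nat list \<Rightarrow> nat \<Rightarrow> nat" where
  "letter_at xs i = xs ! (i - 1)"

definition hamming :: "nat list \<Rightarrow> nat list \<Rightarrow> nat" where
  "hamming xs ys = card {i \<in> {1..length xs}. letter_at xs i \<noteq> letter_at ys i}"

definition U :: "nat \<Rightarrow> nat set \<Rightarrow> nat set set" where
  "U k R = {S. S \<subseteq> {1..k} \<and> R \<subset> S \<and> card S = card R + 1}"

definition freezes :: "nat \<Rightarrow> nat \<Rightarrow> (nat set \<Rightarrow> nat list) \<Rightarrow> nat set \<Rightarrow> nat set \<Rightarrow> bool" where
  "freezes k n \<pi> R A \<longleftrightarrow> A \<subseteq> R \<and>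
     (\<exists>g. inj_on g A \<and> g ` A \<subseteq> {1..n} \<and>
          (\<forall>a\<in>A. \<forall>S\<in>U k R. letter_at (\<pi> S) (g a) = a))"

end

theory Submission
  imports Defs
begin

text \<open>Fix one \<open>S\<^sub>1 = R \<union> {x}\<close> in \<open>\<U>\<^sub>R\<close> and let \<open>p\<close> be the position of \<open>x\<close> in \<open>w = \<pi>(S\<^sub>1)\<close>.
  Every other \<open>\<pi>(S)\<close> misses the letter \<open>x\<close>, so it differs from \<open>w\<close> at \<open>p\<close> and, being a
  permutation of a set containing \<open>R\<close>, at exactly one further position \<open>q\<close>, where it must
  hold the letter \<open>w[q]\<close> moved to \<open>p\<close>. Two strings with different such positions \<open>q \<noteq> q'\<close>
  would differ at \<open>p\<close>, \<open>q\<close> and \<open>q'\<close>, contradicting the distance bound. Hence all strings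
  agree with \<open>w\<close> outside one pair of positions \<open>{p, q}\<close>, and the \<open>n - 2\<close> letters of \<open>w\<close> at
  the remaining positions are frozen.\<close>

lemma letter_at_in_set: "i \<in> {1..length xs} \<Longrightarrow> letter_at xs i \<in> set xs"
  by (auto simp: letter_at_def)

lemma letter_at_surj: "a \<in> set xs \<Longrightarrow> \<exists>i\<in>{1..length xs}. letter_at xs i = a"
proof -
  assume "a \<in> set xs"
  then obtain j where "j < length xs" "xs ! j = a" by (auto simp: in_set_conv_nth)
  then show ?thesis by (intro bexI[of _ "Suc j"]) (auto simp: letter_at_def)
qed

lemma inj_on_letter_at: "distinct xs \<Longrightarrow> inj_on (letter_at xs) {1..length xs}"
  by (rule inj_onI) (auto simp: letter_at_def nth_eq_iff_index_eq)

lemma letter_at_eq_iff: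
  "\<lbrakk>distinct xs; i \<in> {1..length xs}; j \<in> {1..length xs}\<rbrakk>
     \<Longrightarrow> letter_at xs i = letter_at xs j \<longleftrightarrow> i = j"
  using inj_on_letter_at by (metis inj_onD)

lemma image_letter_at: "letter_at xs ` {1..length xs} = set xs"
proof
  show "letter_at xs ` {1..length xs} \<subseteq> set xs" using letter_at_in_set by blast
  show "set xs \<subseteq> letter_at xs ` {1..length xs}"
  proof
    fix a assume "a \<in> set xs"
    then obtain i where "i \<in> {1..length xs}" "letter_at xs i = a" using letter_at_surj by blast
    then show "a \<in> letter_at xs ` {1..length xs}" by (blast intro: sym)
  qed
qed

lemma image_letter_at_remove:
  "\<lbrakk>distinct xs; p \<in> {1..length xs}\<rbrakk>
     \<Longrightarrow> letter_at xs ` ({1..length xs} - {p}) = set xs - {letter_at xs p}"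
  using inj_on_image_set_diff[OF inj_on_letter_at, of xs "{1..length xs}" "{p}"] image_letter_at
  by auto

definition diff_positions :: "nat list \<Rightarrow> nat list \<Rightarrow> nat set" where
  "diff_positions xs ys = {i \<in> {1..length xs}. letter_at xs i \<noteq> letter_at ys i}"

lemma hamming_eq_card_diff_positions: "hamming xs ys = card (diff_positions xs ys)"
  by (simp add: hamming_def diff_positions_def)

lemma diff_positions_self [simp]: "diff_positions xs xs = {}"
  by (simp add: diff_positions_def)

lemma diff_positions_eq_pair:
  assumes "hamming w s \<le> 2" "p \<in> diff_positions w s" "q \<in> diff_positions w s" "p \<noteq> q"
  shows "diff_positions w s = {p, q}"
proof -
  have "finite (diff_positions w s)" by (simp add: diff_positions_def)
  moreover have "{p, q} \<subseteq> diff_positions w s" "card {p, q} = 2" using assms(2-4) by auto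
  ultimately show ?thesis
    using assms(1) card_seteq by (metis hamming_eq_card_diff_positions)
qed

lemma letter_moved_from_other_diff_position:
  assumes "distinct w" "length s = length w"
    and D: "diff_positions w s = {p, q}" and in_s: "letter_at w q \<in> set s"
  shows "letter_at s p = letter_at w q"
proof -
  obtain j where j: "j \<in> {1..length s}" "letter_at s j = letter_at w q"
    using letter_at_surj[OF in_s] by blast
  have q: "q \<in> {1..length w}" "letter_at w q \<noteq> letter_at s q"
    using D by (auto simp: diff_positions_def)
  have "j \<in> diff_positions w s"
  proof (rule ccontr)
    assume "j \<notin> diff_positions w s"
    then have "letter_at w j = letter_at w q" using j assms(2) by (auto simp: diff_positions_def)
    then have "j = q" using letter_at_eq_iff[OF assms(1)] j q assms(2) by auto
    then show False using j q by simp
  qed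
  moreover have "j \<noteq> q" using j q by auto
  ultimately show ?thesis using D j by auto
qed

lemma diff_positions_if_only_one_differs:
  "\<lbrakk>i \<in> diff_positions w s; i \<notin> diff_positions w s'; length s = length w\<rbrakk>
     \<Longrightarrow> i \<in> diff_positions s s'"
  by (simp add: diff_positions_def)

lemma three_le_hamming_of_distinct_pairs:
  assumes "length s = length w" "length s' = length w"
    and D: "diff_positions w s = {p, q}" and D': "diff_positions w s' = {p, q'}"
    and "q \<noteq> q'" "p \<noteq> q" "p \<noteq> q'"
    and "letter_at s p \<noteq> letter_at s' p"
  shows "3 \<le> hamming s s'"
proof -
  have "p \<in> {1..length s}" using D assms(1) by (auto simp: diff_positions_def)
  then have "p \<in> diff_positions s s'" using assms(8) by (simp add: diff_positions_def)
  moreover have "q \<in> diff_positions s s'"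
    by (rule diff_positions_if_only_one_differs) (use D D' assms(1,5,6) in auto)
  moreover have "q' \<in> diff_positions s' s"
    by (rule diff_positions_if_only_one_differs) (use D D' assms(2,5,7) in auto)
  moreover have "diff_positions s' s = diff_positions s s'"
    using assms(1,2) by (auto simp: diff_positions_def)
  ultimately have "{p, q, q'} \<subseteq> diff_positions s s'" by simp
  moreover have "card {p, q, q'} = 3" using assms(5-7) by simp
  moreover have "finite (diff_positions s s')" by (simp add: diff_positions_def)
  ultimately show ?thesis
    unfolding hamming_eq_card_diff_positions by (metis card_mono)
qed

text \<open>Abstract form of the argument: \<open>F\<close> plays the role of \<open>\<pi>(\<U>\<^sub>R)\<close>, \<open>w = \<pi>(S\<^sub>1)\<close>, and
  \<open>letter_at w p\<close> is the letter \<open>x\<close> of \<open>S\<^sub>1 - R\<close>.\<close>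

lemma diff_positions_within_pair:
  assumes "distinct w" "w \<in> F" "p \<in> {1..length w}"
    and perm: "\<forall>s\<in>F. distinct s \<and> length s = length w"
    and missing: "\<forall>s\<in>F. s \<noteq> w \<longrightarrow> letter_at w p \<notin> set s"
    and common: "\<forall>s\<in>F. set w - {letter_at w p} \<subseteq> set s"
    and close: "\<forall>s\<in>F. \<forall>s'\<in>F. hamming s s' \<le> 2"
  shows "\<exists>q. \<forall>s\<in>F. diff_positions w s \<subseteq> {p, q}"
proof -
  have p_diff: "p \<in> diff_positions w s" if "s \<in> F" "s \<noteq> w" for s
    using that missing assms(3) letter_at_in_set[of p s] perm by (auto simp: diff_positions_def)
  have pair: "diff_positions w s = {p, q}"
    if "s \<in> F" "q \<in> diff_positions w s" "q \<noteq> p" for s q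
  proof (rule diff_positions_eq_pair)
    show "p \<in> diff_positions w s" using that p_diff by fastforce
  qed (use that close assms(2) in auto)
  have moved: "letter_at s p = letter_at w q"
    if "s \<in> F" "q \<in> diff_positions w s" "q \<noteq> p" for s q
  proof (rule letter_moved_from_other_diff_position)
    have "q \<in> {1..length w}" using that(2) by (simp add: diff_positions_def)
    then show "letter_at w q \<in> set s"
      using that common letter_at_in_set[of q w] letter_at_eq_iff[OF assms(1)] assms(3) by auto
  qed (use that pair[OF that] assms(1) perm in auto)
  have unique: "q = q'"
    if "s \<in> F" "q \<in> diff_positions w s" "q \<noteq> p"
      "s' \<in> F" "q' \<in> diff_positions w s'" "q' \<noteq> p" for s s' q q'
  proof (rule ccontr)
    assume "q \<noteq> q'"
    have "q \<in> {1..length w}" "q' \<in> {1..length w}"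
      using that(2,5) by (auto simp: diff_positions_def)
    then have "letter_at s p \<noteq> letter_at s' p"
      using moved[OF that(1-3)] moved[OF that(4-6)] \<open>q \<noteq> q'\<close> letter_at_eq_iff[OF assms(1)] by auto
    then have "3 \<le> hamming s s'"
      using three_le_hamming_of_distinct_pairs pair[OF that(1-3)] pair[OF that(4-6)]
        \<open>q \<noteq> q'\<close> that perm by metis
    then show False using close that by fastforce
  qed
  show ?thesis
  proof (cases "\<exists>s\<in>F. \<exists>q\<in>diff_positions w s. q \<noteq> p")
    case True
    then obtain s q where "s \<in> F" "q \<in> diff_positions w s" "q \<noteq> p" by blast
    then show ?thesis using unique by blast
  qed blast
qed

lemma U_iff:
  assumes "finite R" "R \<subseteq> {1..k}"
  shows "S \<in> U k R \<longleftrightarrow> (\<exists>y \<in> {1..k} - R. S = insert y R)"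
proof
  assume S: "S \<in> U k R"
  then obtain y where y: "y \<in> S" "y \<notin> R" by (auto simp: U_def)
  have "finite S" using S finite_subset by (auto simp: U_def)
  moreover have "insert y R \<subseteq> S" "card (insert y R) = card S"
    using S y assms(1) by (auto simp: U_def)
  ultimately have "insert y R = S" by (simp add: card_subset_eq)
  then show "\<exists>y \<in> {1..k} - R. S = insert y R" using S y by (auto simp: U_def)
qed (use assms in \<open>auto simp: U_def\<close>)

lemma U_diff_positions_within_pair:
  assumes perm: "\<forall>S\<in>U k R. length (\<pi> S) = n \<and> distinct (\<pi> S) \<and> set (\<pi> S) = S"
    and R: "finite R" "R \<subseteq> {1..k}" and x: "x \<in> {1..k} - R"
    and p: "p \<in> {1..n}" "letter_at (\<pi> (insert x R)) p = x"
    and close: "\<forall>S\<in>U k R. \<forall>S'\<in>U k R. hamming (\<pi> S) (\<pi> S') \<le> 2"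
  shows "\<exists>q. \<forall>S\<in>U k R. diff_positions (\<pi> (insert x R)) (\<pi> S) \<subseteq> {p, q}"
proof -
  define w where "w = \<pi> (insert x R)"
  have S1: "insert x R \<in> U k R" using U_iff[OF R] x by blast
  then have w: "length w = n" "distinct w" "set w = insert x R"
    using perm unfolding w_def by blast+
  have "\<exists>q. \<forall>s\<in>\<pi> ` U k R. diff_positions w s \<subseteq> {p, q}"
  proof (rule diff_positions_within_pair)
    show "distinct w" "w \<in> \<pi> ` U k R" "p \<in> {1..length w}"
      using w S1 p(1) by (auto simp: w_def)
    show "\<forall>s\<in>\<pi> ` U k R. distinct s \<and> length s = length w"
      using perm w(1) by blast
    show "\<forall>s\<in>\<pi> ` U k R. set w - {letter_at w p} \<subseteq> set s"
      using perm w(3) p(2) by (fastforce simp: w_def U_def)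
    show "\<forall>s\<in>\<pi> ` U k R. \<forall>s'\<in>\<pi> ` U k R. hamming s s' \<le> 2"
      using close by blast
    show "\<forall>s\<in>\<pi> ` U k R. s \<noteq> w \<longrightarrow> letter_at w p \<notin> set s"
    proof (intro ballI impI)
      fix s assume "s \<in> \<pi> ` U k R" "s \<noteq> w"
      then obtain S where S: "S \<in> U k R" "s = \<pi> S" by blast
      then obtain y where "y \<notin> R" "S = insert y R" using U_iff[OF R] by blast
      moreover have "y \<noteq> x" using S \<open>s \<noteq> w\<close> calculation(2) by (metis w_def)
      moreover have "set s = S" using bspec[OF perm S(1)] S(2) by simp
      ultimately show "letter_at w p \<notin> set s" using p(2) x by (simp add: w_def)
    qed
  qed
  then show ?thesis by (auto simp: w_def)
qed

lemma freezes_letters_at_agreeing_positions: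
  assumes "distinct w" "length w = n" "P \<subseteq> {1..n}"
    and "letter_at w ` P \<subseteq> R"
    and "\<forall>S\<in>U k R. \<forall>i\<in>P. letter_at (\<pi> S) i = letter_at w i"
  shows "freezes k n \<pi> R (letter_at w ` P)"
proof -
  have inj: "inj_on (letter_at w) P"
    using inj_on_letter_at[OF assms(1)] assms(2,3) inj_on_subset by blast
  show ?thesis
    unfolding freezes_def
  proof (intro conjI exI[of _ "inv_into P (letter_at w)"])
    show "inj_on (inv_into P (letter_at w)) (letter_at w ` P)" by (rule inj_on_inv_into) simp
  qed (use assms inj in auto)
qed

lemma exists_frozen_set_outside_pair:
  assumes w: "distinct w" "length w = n"
    and letters: "letter_at w ` ({1..n} - {p}) \<subseteq> R"
    and pair: "\<forall>S\<in>U k R. diff_positions w (\<pi> S) \<subseteq> {p, q}"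
  shows "\<exists>A \<subseteq> R. card A = n - 2 \<and> freezes k n \<pi> R A"
proof -
  have "card {p, q} \<le> 2" by (simp add: card_insert_if)
  then have "n - 2 \<le> card ({1..n} - {p, q})"
    using diff_card_le_card_Diff[of "{p, q}" "{1..n}"] by simp
  then obtain P where P: "P \<subseteq> {1..n} - {p, q}" "card P = n - 2"
    by (meson obtain_subset_with_card_n)
  have agree: "\<forall>S\<in>U k R. \<forall>i\<in>P. letter_at (\<pi> S) i = letter_at w i"
  proof (intro ballI)
    fix S i assume "S \<in> U k R" "i \<in> P"
    then have "i \<notin> diff_positions w (\<pi> S)" "i \<in> {1..length w}" using pair P w(2) by auto
    then show "letter_at (\<pi> S) i = letter_at w i" by (simp add: diff_positions_def)
  qed
  have "inj_on (letter_at w) P"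
    using inj_on_letter_at[OF w(1)] inj_on_subset P(1) w(2) by blast
  then have "card (letter_at w ` P) = n - 2" using P(2) by (simp add: card_image)
  moreover have "letter_at w ` P \<subseteq> R" using letters P(1) by blast
  moreover have "freezes k n \<pi> R (letter_at w ` P)"
    using w P(1) calculation(2) agree by (intro freezes_letters_at_agreeing_positions) auto
  ultimately show ?thesis by blast
qed

theorem lemma3p6:
  fixes k n :: nat and \<pi> :: "nat set \<Rightarrow> nat list" and R :: "nat set"
  assumes "2 \<le> n" and "n \<le> k"
    and "\<forall>S. S \<subseteq> {1..k} \<and> card S = n \<longrightarrow>
           length (\<pi> S) = n \<and> distinct (\<pi> S) \<and> set (\<pi> S) = S"
    and "R \<subseteq> {1..k}" and "card R = n - 1"
    and "\<forall>S\<in>U k R. \<forall>S'\<in>U k R. hamming (\<pi> S) (\<pi> S') \<le> 2"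
  shows "\<exists>A. A \<subseteq> R \<and> card A = n - 2 \<and> freezes k n \<pi> R A"
proof -
  have finR: "finite R" using assms(4) finite_subset by blast
  have perm: "\<forall>S\<in>U k R. length (\<pi> S) = n \<and> distinct (\<pi> S) \<and> set (\<pi> S) = S"
    using assms(1,3,5) by (auto simp: U_def)
  obtain x where x: "x \<in> {1..k} - R"
    using assms(1,2,5) finR card_mono[of R "{1..k}"] by fastforce
  define w where "w = \<pi> (insert x R)"
  have "insert x R \<in> U k R" using U_iff[OF finR assms(4)] x by blast
  then have w: "length w = n" "distinct w" "set w = insert x R"
    using bspec[OF perm] unfolding w_def by blast+
  obtain p where p: "p \<in> {1..n}" "letter_at w p = x"
    using letter_at_surj[of x w] w by auto
  obtain q where q: "\<forall>S\<in>U k R. diff_positions w (\<pi> S) \<subseteq> {p, q}"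
    using U_diff_positions_within_pair[OF perm finR assms(4) x p[unfolded w_def] assms(6)]
    by (auto simp: w_def)
  have "letter_at w ` ({1..n} - {p}) = set w - {x}"
    using image_letter_at_remove[OF w(2), of p] w(1) p by simp
  also have "\<dots> = R" using w(3) x by auto
  finally show ?thesis
    using exists_frozen_set_outside_pair[OF w(2,1) _ q] by blast
qed

end
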